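(* Fix $0<\alpha<1$ and $0<p_1<\frac12<p_2<1$, and suppose $(1-\alpha)(1-p_1)+\alpha(1-p_2)>\frac12$. For each $d\ge1$ let $\mu_d$ be the distribution on $Q_d$ given by \[ \mu_d(X)=(1-\alpha)p_1^{|X|}(1-p_1)^{d-|X|}+\alpha\,p_2^{|X|}(1-p_2)^{d-|X|}. \] (Then $w_i^0=(1-\alpha)(1-p_1)+\alpha(1-p_2)>\frac12$ for every $i$, so the majority point is $\mathbf 0$.) For every $d\ge1$, under $\mu_d$ at least one of the following holds: (a) $\mathbf 0$ is a best response to $\mathbf 0$, and hence $(\mathbf 0,\mathbf 0)$ is an equilibrium; (b) $\mathbf 1$ is a best response to $\mathbf 0$. Moreover, $P_1(\mathbf 1,\mathbf 0)\to\alpha$ as $d\to\infty$; in particular, if $\alpha>\frac12$ then for all sufficiently large $d$, $P_1(\mathbf 1,\mathbf 0)>\frac12$, so $(\mathbf 0,\mathbf 0)$ is not an equilibrium and $\mathbf 1$ is a best response to $\mathbf 0$, while if $\alpha<\frac12$ then for all sufficiently large $d$, $(\mathbf 0,\mathbf 0)$ is an equilibrium.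
   Context: $Q_d=\{0,1\}^d$ with the Hamming distance $d(X,Y)=|\{i: x_i\neq y_i\}|$; $|X|$ is the number of coordinates equal to $1$. For a probability distribution $\mu$ on $Q_d$ (extended additively to subsets), and $A,B\in Q_d$, let $V(A,B)=\{Z: d(Z,A)<d(Z,B)\}$, $T(A,B)=\{Z: d(Z,A)=d(Z,B)\}$, $P_1(A,B)=\mu(V(A,B))+\frac12\mu(T(A,B))$, $P_2(A,B)=\mu(V(B,A))+\frac12\mu(T(A,B))$. $(A,B)$ is an equilibrium if $P_1(A,B)\ge P_1(A',B)$ for all $A'$ and $P_2(A,B)\ge P_2(A,B')$ for all $B'$. $X$ is a best response to $B$ if $P_1(X,B)\ge P_1(X',B)$ for all $X'\in Q_d$. $w_i^0=\mu(\{Z: z_i=0\})$. $\mathbf 0=(0,\dots,0)$, $\mathbf 1=(1,\dots,1)$. *)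

theory Defs
  imports Complex_Main
begin

text \<open>Points of Q_d are encoded as subsets of {0..<d} (the set of coordinates equal to 1).\<close>

definition cube :: "nat \<Rightarrow> nat set set" where
  "cube d = Pow {0..<d}"

definition hdist :: "nat set \<Rightarrow> nat set \<Rightarrow> nat" where
  "hdist X Y = card ((X - Y) \<union> (Y - X))"

definition vor :: "nat \<Rightarrow> nat set \<Rightarrow> nat set \<Rightarrow> nat set set" where
  "vor d A B = {Z \<in> cube d. hdist Z A < hdist Z B}"

definition tie :: "nat \<Rightarrow> nat set \<Rightarrow> nat set \<Rightarrow> nat set set" where
  "tie d A B = {Z \<in> cube d. hdist Z A = hdist Z B}"

definition P1 :: "nat \<Rightarrow> (nat set \<Rightarrow> real) \<Rightarrow> nat set \<Rightarrow> nat set \<Rightarrow> real" where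
  "P1 d mu A B = (\<Sum>Z\<in>vor d A B. mu Z) + 1/2 * (\<Sum>Z\<in>tie d A B. mu Z)"

definition P2 :: "nat \<Rightarrow> (nat set \<Rightarrow> real) \<Rightarrow> nat set \<Rightarrow> nat set \<Rightarrow> real" where
  "P2 d mu A B = (\<Sum>Z\<in>vor d B A. mu Z) + 1/2 * (\<Sum>Z\<in>tie d A B. mu Z)"

definition equilibrium :: "nat \<Rightarrow> (nat set \<Rightarrow> real) \<Rightarrow> nat set \<Rightarrow> nat set \<Rightarrow> bool" where
  "equilibrium d mu A B \<longleftrightarrow> A \<in> cube d \<and> B \<in> cube d \<and>
     (\<forall>A'\<in>cube d. P1 d mu A B \<ge> P1 d mu A' B) \<and>
     (\<forall>B'\<in>cube d. P2 d mu A B \<ge> P2 d mu A B')"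

definition best_response :: "nat \<Rightarrow> (nat set \<Rightarrow> real) \<Rightarrow> nat set \<Rightarrow> nat set \<Rightarrow> bool" where
  "best_response d mu X B \<longleftrightarrow> X \<in> cube d \<and> (\<forall>X'\<in>cube d. P1 d mu X B \<ge> P1 d mu X' B)"

definition mix_mu :: "real \<Rightarrow> real \<Rightarrow> real \<Rightarrow> nat \<Rightarrow> nat set \<Rightarrow> real" where
  "mix_mu \<alpha> p1 p2 d X =
     (1 - \<alpha>) * p1 ^ card X * (1 - p1) ^ (d - card X) + \<alpha> * p2 ^ card X * (1 - p2) ^ (d - card X)"

end

theory Submission
  imports Defs "HOL-Analysis.Weierstrass_Theorems"
begin

text \<open>A voter \<open>Z\<close> is closer to \<open>X\<close> than to \<open>\<zero>\<close> iff \<open>Z\<close> has ones in more than half of the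
  coordinates of \<open>X\<close>. Hence \<open>P\<^sub>1(X, \<zero>) = g |X|\<close> with
  \<open>g k = (1 - \<alpha>) f\<^sub>k(p\<^sub>1) + \<alpha> f\<^sub>k(p\<^sub>2)\<close>, where \<open>f\<^sub>k(p)\<close> is the probability that a
  Binomial(\<open>k\<close>, \<open>p\<close>) count is a strict majority, ties counting one half.
  One has \<open>f\<^sub>2\<^sub>m\<^sub>+\<^sub>2 = f\<^sub>2\<^sub>m\<^sub>+\<^sub>1\<close> and
  \<open>f\<^sub>2\<^sub>m\<^sub>+\<^sub>3(p) - f\<^sub>2\<^sub>m\<^sub>+\<^sub>1(p) = C(2m+1, m) (p (1 - p))\<^sup>m\<^sup>+\<^sup>1 (2p - 1)\<close>, and the
  hypothesis makes the increments of \<open>g\<close> along odd \<open>k\<close> change sign at most once, from negative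
  to nonnegative. With \<open>g 0 = 1/2\<close> and \<open>g 1 < 1/2\<close> this gives \<open>g k \<le> max (1/2) (g d)\<close> for
  \<open>k \<le> d\<close>, so \<open>\<zero>\<close> or \<open>\<one>\<close> is a best response to \<open>\<zero>\<close>. A Chernoff bound
  \<open>f\<^sub>k(p) \<le> (2 \<surd>(p (1 - p)))\<^sup>k\<close> for \<open>p < 1/2\<close> gives \<open>g d \<longlonglongrightarrow> \<alpha>\<close>.\<close>

definition bernstein_expect :: "nat \<Rightarrow> (nat \<Rightarrow> real) \<Rightarrow> real \<Rightarrow> real" where
  "bernstein_expect n u x = (\<Sum>k\<le>n. u k * Bernstein n k x)"

lemma Bernstein_eq_0: "n < k \<Longrightarrow> Bernstein n k x = 0"
  by (simp add: Bernstein_def)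

lemma Bernstein_Suc_0: "Bernstein (Suc n) 0 x = (1 - x) * Bernstein n 0 x"
  by (simp add: Bernstein_def)

lemma Bernstein_Suc_Suc:
  "Bernstein (Suc n) (Suc k) x = x * Bernstein n k x + (1 - x) * Bernstein n (Suc k) x"
proof (cases "k < n")
  case True
  then have "n - k = Suc (n - Suc k)" by simp
  with True show ?thesis by (simp add: Bernstein_def algebra_simps)
next
  case False
  then show ?thesis by (simp add: Bernstein_def algebra_simps)
qed

text \<open>Conditioning on the last of the \<open>n + 1\<close> trials.\<close>
lemma bernstein_expect_Suc:
  "bernstein_expect (Suc n) u x = bernstein_expect n (\<lambda>k. (1 - x) * u k + x * u (Suc k)) x"
proof -
  have "bernstein_expect (Suc n) u x
      = u 0 * Bernstein (Suc n) 0 x + (\<Sum>k\<le>n. u (Suc k) * Bernstein (Suc n) (Suc k) x)"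
    unfolding bernstein_expect_def by (simp only: sum.atMost_Suc_shift)
  also have "\<dots> = (\<Sum>k\<le>Suc n. (1 - x) * u k * Bernstein n k x)
                 + (\<Sum>k\<le>n. x * u (Suc k) * Bernstein n k x)"
    by (simp only: sum.atMost_Suc_shift)
       (simp add: Bernstein_Suc_0 Bernstein_Suc_Suc sum.distrib[symmetric] algebra_simps)
  also have "(\<Sum>k\<le>Suc n. (1 - x) * u k * Bernstein n k x) = (\<Sum>k\<le>n. (1 - x) * u k * Bernstein n k x)"
    by (simp add: Bernstein_eq_0)
  finally show ?thesis
    by (simp add: bernstein_expect_def distrib_right sum.distrib)
qed

lemma sum_Pow_insert:
  assumes "finite D" "a \<notin> D"
  shows "(\<Sum>Z\<in>Pow (insert a D). f Z) = (\<Sum>Z\<in>Pow D. f Z + f (insert a Z))"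
proof -
  have "inj_on (insert a) (Pow D)"
    using assms(2) by (intro inj_onI) (metis PowD insert_ident subsetD)
  then have "(\<Sum>Z\<in>insert a ` Pow D. f Z) = (\<Sum>Z\<in>Pow D. f (insert a Z))"
    by (simp add: sum.reindex)
  moreover have "(\<Sum>Z\<in>Pow (insert a D). f Z) = (\<Sum>Z\<in>Pow D. f Z) + (\<Sum>Z\<in>insert a ` Pow D. f Z)"
    unfolding Pow_insert by (rule sum.union_disjoint) (use assms in auto)
  ultimately show ?thesis by (simp add: sum.distrib)
qed

lemma sum_Pow_Bernoulli_card_Int:
  assumes "finite D"
  shows "(\<Sum>Z\<in>Pow D. u (card (Z \<inter> X)) * x ^ card Z * (1 - x) ^ (card D - card Z))
       = bernstein_expect (card (D \<inter> X)) u x"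
  using assms
proof (induction D arbitrary: u rule: finite_induct)
  case empty
  then show ?case by (simp add: bernstein_expect_def Bernstein_def)
next
  case (insert a D)
  define w where "w Z = x ^ card Z * (1 - x) ^ (card D - card Z)" for Z :: "'a set"
  have card_Z: "card Z \<le> card D" "finite Z" "a \<notin> Z" if "Z \<in> Pow D" for Z
    using that insert.hyps by (auto intro: card_mono finite_subset)
  have "(\<Sum>Z\<in>Pow (insert a D). u (card (Z \<inter> X)) * x ^ card Z * (1 - x) ^ (card (insert a D) - card Z))
      = (\<Sum>Z\<in>Pow D. ((1 - x) * u (card (Z \<inter> X)) + x * u (card (insert a Z \<inter> X))) * w Z)"
    unfolding sum_Pow_insert[OF insert.hyps]
    by (intro sum.cong) (auto simp: card_Z insert.hyps Suc_diff_le w_def algebra_simps)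
  also have "\<dots> = bernstein_expect (card (insert a D \<inter> X)) u x"
  proof (cases "a \<in> X")
    case True
    have "card (insert a Z \<inter> X) = Suc (card (Z \<inter> X))" if "Z \<in> Pow D" for Z
      using True card_Z[OF that] by (simp add: Int_insert_left)
    then have "(\<Sum>Z\<in>Pow D. ((1 - x) * u (card (Z \<inter> X)) + x * u (card (insert a Z \<inter> X))) * w Z)
        = bernstein_expect (card (D \<inter> X)) (\<lambda>k. (1 - x) * u k + x * u (Suc k)) x"
      unfolding insert.IH[symmetric] w_def by (intro sum.cong) (simp_all add: mult.assoc)
    with True insert.hyps show ?thesis
      by (simp add: Int_insert_left bernstein_expect_Suc finite_subset)
  next
    case False
    then have "card (insert a D \<inter> X) = card (D \<inter> X)" "\<And>Z. insert a Z \<inter> X = Z \<inter> X"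
      by auto
    then show ?thesis
      by (simp add: insert.IH[symmetric] w_def algebra_simps)
  qed
  finally show ?case .
qed

definition majority_weight :: "nat \<Rightarrow> nat \<Rightarrow> real" where
  "majority_weight n k = (if n < 2 * k then 1 else if n = 2 * k then 1/2 else 0)"

definition majority_prob :: "nat \<Rightarrow> real \<Rightarrow> real" where
  "majority_prob n x = bernstein_expect n (majority_weight n) x"

lemma majority_prob_0: "majority_prob 0 x = 1/2"
  by (simp add: majority_prob_def bernstein_expect_def majority_weight_def Bernstein_def)

lemma majority_prob_1: "majority_prob 1 x = x"
  by (simp add: majority_prob_def bernstein_expect_def majority_weight_def Bernstein_def)

lemma majority_weight_le_1: "majority_weight n k \<le> 1"
  and majority_weight_nonneg: "0 \<le> majority_weight n k"
  by (auto simp: majority_weight_def)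

lemma Bernstein_one_minus: "k \<le> n \<Longrightarrow> Bernstein n k (1 - x) = Bernstein n (n - k) x"
  unfolding Bernstein_def by (subst binomial_symmetric) (simp_all add: mult_ac)

lemma majority_prob_one_minus: "majority_prob n (1 - x) = 1 - majority_prob n x"
proof -
  have "majority_prob n (1 - x) = (\<Sum>k\<le>n. majority_weight n k * Bernstein n (n - k) x)"
    unfolding majority_prob_def bernstein_expect_def
    by (intro sum.cong) (simp_all add: Bernstein_one_minus)
  also have "\<dots> = (\<Sum>k\<le>n. majority_weight n (n - k) * Bernstein n k x)"
    using sum.atLeastAtMost_rev[of "\<lambda>k. majority_weight n k * Bernstein n (n - k) x" 0 n]
    by (simp add: atLeast0AtMost)
  also have "\<dots> = (\<Sum>k\<le>n. Bernstein n k x - majority_weight n k * Bernstein n k x)"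
    by (intro sum.cong) (auto simp: majority_weight_def algebra_simps)
  finally show ?thesis
    by (simp add: sum_subtractf majority_prob_def bernstein_expect_def)
qed

lemma bernstein_expect_diff:
  "bernstein_expect n u x - bernstein_expect n v x = (\<Sum>k\<le>n. (u k - v k) * Bernstein n k x)"
  unfolding bernstein_expect_def by (simp add: sum_subtractf left_diff_distrib)

lemma sum_atMost_two_point:
  fixes u f :: "nat \<Rightarrow> 'a::comm_semiring_1"
  assumes "Suc m \<le> n" "\<And>k. u k = (if k = m then A else 0) + (if k = Suc m then B else 0)"
  shows "(\<Sum>k\<le>n. u k * f k) = A * f m + B * f (Suc m)"
proof -
  have "(\<Sum>k\<le>n. u k * f k) = (\<Sum>k\<le>n. if k = m then A * f k else 0) + (\<Sum>k\<le>n. if k = Suc m then B * f k else 0)"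
    unfolding sum.distrib[symmetric] by (intro sum.cong) (simp_all add: assms(2))
  with assms(1) show ?thesis by simp
qed

lemma Bernstein_middle:
  "Bernstein (2 * n + 1) n x = real (2 * n + 1 choose n) * x ^ n * (1 - x) ^ Suc n"
  "Bernstein (2 * n + 1) (Suc n) x = real (2 * n + 1 choose n) * x ^ Suc n * (1 - x) ^ n"
  using binomial_symmetric[of "Suc n" "2 * n + 1"] by (simp_all add: Bernstein_def)

text \<open>An extra voter only matters when the first \<open>2 n + 1\<close> votes are one short of a majority
  on either side, and it then contributes \<open>\<plusminus>1/2\<close>; these two effects cancel.\<close>
lemma majority_prob_even: "majority_prob (2 * n + 2) x = majority_prob (2 * n + 1) x"
proof -
  have "majority_prob (2 * n + 2) x - majority_prob (2 * n + 1) x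
      = (\<Sum>k\<le>2 * n + 1. ((1 - x) * majority_weight (2 * n + 2) k + x * majority_weight (2 * n + 2) (Suc k)
                          - majority_weight (2 * n + 1) k) * Bernstein (2 * n + 1) k x)"
    unfolding majority_prob_def bernstein_expect_diff[symmetric]
    using bernstein_expect_Suc[of "2 * n + 1" "majority_weight (2 * n + 2)" x] by simp
  also have "\<dots> = x / 2 * Bernstein (2 * n + 1) n x - (1 - x) / 2 * Bernstein (2 * n + 1) (Suc n) x"
    by (subst sum_atMost_two_point[where m = n and A = "x / 2" and B = "- (1 - x) / 2"])
       (auto simp: majority_weight_def field_simps)
  also have "\<dots> = 0"
    unfolding Bernstein_middle by (simp add: field_simps)
  finally show ?thesis by simp
qed

lemma majority_prob_odd_step:
  "majority_prob (2 * n + 3) x - majority_prob (2 * n + 1) x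
     = real (2 * n + 1 choose n) * (x * (1 - x)) ^ Suc n * (2 * x - 1)"
proof -
  have "majority_prob (2 * n + 3) x - majority_prob (2 * n + 1) x
      = (\<Sum>k\<le>2 * n + 1. ((1 - x) * ((1 - x) * majority_weight (2 * n + 3) k + x * majority_weight (2 * n + 3) (Suc k))
            + x * ((1 - x) * majority_weight (2 * n + 3) (Suc k) + x * majority_weight (2 * n + 3) (Suc (Suc k)))
          - majority_weight (2 * n + 1) k) * Bernstein (2 * n + 1) k x)"
    unfolding majority_prob_def bernstein_expect_diff[symmetric]
    using bernstein_expect_Suc[of "Suc (2 * n + 1)" "majority_weight (2 * n + 3)" x]
      bernstein_expect_Suc[of "2 * n + 1" _ x]
    by (simp add: numeral_3_eq_3)
  also have "\<dots> = x\<^sup>2 * Bernstein (2 * n + 1) n x - (1 - x)\<^sup>2 * Bernstein (2 * n + 1) (Suc n) x"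
    by (subst sum_atMost_two_point[where m = n and A = "x\<^sup>2" and B = "- (1 - x)\<^sup>2"])
       (auto simp: majority_weight_def algebra_simps power2_eq_square)
  also have "\<dots> = real (2 * n + 1 choose n) * (x * (1 - x)) ^ Suc n * (2 * x - 1)"
    unfolding Bernstein_middle power_mult_distrib by (simp add: algebra_simps power2_eq_square)
  finally show ?thesis .
qed

lemma power_mult_power_le_sqrt_power:
  fixes a b :: real
  assumes "0 \<le> a" "a \<le> b" "n \<le> 2 * k" "k \<le> n"
  shows "a ^ k * b ^ (n - k) \<le> sqrt (a * b) ^ n"
proof -
  define m t where "m = n - k" and "t = k - m"
  have k: "k = m + t" and n: "n = 2 * m + t"
    using assms(3,4) unfolding m_def t_def by auto
  have "a \<le> sqrt (a * b)"
    using assms(1,2) real_sqrt_le_mono[of "a * a" "a * b"] by (simp add: mult_left_mono)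
  then have "a ^ t \<le> sqrt (a * b) ^ t"
    using assms(1) by (simp add: power_mono)
  have "a ^ k * b ^ (n - k) = (a * b) ^ m * a ^ t"
    unfolding m_def[symmetric] by (simp add: k power_add power_mult_distrib)
  also have "\<dots> \<le> (a * b) ^ m * sqrt (a * b) ^ t"
    using \<open>a ^ t \<le> sqrt (a * b) ^ t\<close> assms(1,2) by (simp add: mult_left_mono)
  also have "\<dots> = sqrt (a * b) ^ n"
    using assms(1,2) by (simp add: n power_add power_mult)
  finally show ?thesis .
qed

lemma majority_prob_nonneg: "0 \<le> x \<Longrightarrow> x \<le> 1 \<Longrightarrow> 0 \<le> majority_prob n x"
  unfolding majority_prob_def bernstein_expect_def
  by (intro sum_nonneg mult_nonneg_nonneg majority_weight_nonneg Bernstein_nonneg)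

text \<open>A Chernoff-type bound: each term of a majority has \<open>x ^ k (1 - x) ^ (n - k) \<le> (x (1 - x)) ^ (n / 2)\<close>.\<close>
lemma majority_prob_le:
  assumes "0 \<le> x" "x \<le> 1/2"
  shows "majority_prob n x \<le> (2 * sqrt (x * (1 - x))) ^ n"
proof -
  have "majority_weight n k * Bernstein n k x \<le> real (n choose k) * sqrt (x * (1 - x)) ^ n"
    if "k \<le> n" for k
  proof (cases "n \<le> 2 * k")
    case True
    have "majority_weight n k * Bernstein n k x \<le> Bernstein n k x"
      using assms by (intro mult_left_le_one_le Bernstein_nonneg majority_weight_nonneg majority_weight_le_1) auto
    also have "\<dots> \<le> real (n choose k) * sqrt (x * (1 - x)) ^ n"
      unfolding Bernstein_def mult.assoc
      using assms True that by (intro mult_left_mono power_mult_power_le_sqrt_power) auto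
    finally show ?thesis .
  next
    case False
    then show ?thesis using assms by (simp add: majority_weight_def)
  qed
  then have "majority_prob n x \<le> (\<Sum>k\<le>n. real (n choose k) * sqrt (x * (1 - x)) ^ n)"
    unfolding majority_prob_def bernstein_expect_def by (intro sum_mono) simp
  also have "\<dots> = (2 * sqrt (x * (1 - x))) ^ n"
    by (simp add: power_mult_distrib flip: sum_distrib_right of_nat_sum choose_row_sum)
  finally show ?thesis .
qed

lemma two_sqrt_mult_one_minus_lt_1:
  fixes x :: real
  assumes "x \<noteq> 1/2"
  shows "2 * sqrt (x * (1 - x)) < 1"
proof -
  have "0 < (2 * x - 1)\<^sup>2" using assms by simp
  then have "4 * (x * (1 - x)) < 1" by (simp add: power2_eq_square algebra_simps)
  then have "sqrt (4 * (x * (1 - x))) < 1" by simp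
  then show ?thesis by (simp add: real_sqrt_mult)
qed

lemma majority_prob_tendsto_0:
  assumes "0 \<le> x" "x < 1/2"
  shows "(\<lambda>n. majority_prob n x) \<longlonglongrightarrow> 0"
proof (rule tendsto_sandwich)
  show "\<forall>\<^sub>F n in sequentially. 0 \<le> majority_prob n x"
    using assms majority_prob_nonneg by simp
  show "\<forall>\<^sub>F n in sequentially. majority_prob n x \<le> (2 * sqrt (x * (1 - x))) ^ n"
    using assms majority_prob_le by simp
  show "(\<lambda>n. (2 * sqrt (x * (1 - x))) ^ n) \<longlonglongrightarrow> 0"
    using assms two_sqrt_mult_one_minus_lt_1[of x] by (intro LIMSEQ_power_zero) simp
qed simp

lemma majority_prob_tendsto_1:
  assumes "1/2 < x" "x \<le> 1"
  shows "(\<lambda>n. majority_prob n x) \<longlonglongrightarrow> 1"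
proof -
  have "(\<lambda>n. 1 - majority_prob n (1 - x)) \<longlonglongrightarrow> 1 - 0"
    using assms by (intro tendsto_diff majority_prob_tendsto_0) auto
  then show ?thesis by (simp add: majority_prob_one_minus)
qed

lemma le_max_endpoints_if_increase_persists:
  fixes h :: "nat \<Rightarrow> 'a::linorder"
  assumes persist: "\<And>n. h n \<le> h (Suc n) \<Longrightarrow> h (Suc n) \<le> h (Suc (Suc n))"
  shows "n \<le> N \<Longrightarrow> h n \<le> max (h 0) (h N)"
proof (induction N arbitrary: n)
  case 0
  then show ?case by simp
next
  case (Suc N)
  show ?case
  proof (cases "h N \<le> h (Suc N)")
    case True
    show ?thesis
    proof (cases "n = Suc N")
      case False
      then have "h n \<le> max (h 0) (h N)" using Suc by simp
      then show ?thesis using True by (simp add: le_max_iff_disj) (meson order.trans)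
    qed simp
  next
    case False
    have "h (Suc j) < h j" if "j \<le> N" for j
      using that
    proof (induction j rule: inc_induct)
      case base
      then show ?case using False by simp
    next
      case (step j)
      then show ?case using persist[of j] by (meson not_le)
    qed
    then have "h m \<le> h 0" if "m \<le> Suc N" for m
      using that
    proof (induction m)
      case (Suc m)
      then have "h (Suc m) < h m" "h m \<le> h 0" by simp_all
      then show ?case by simp
    qed simp
    then show ?thesis using Suc.prems by (simp add: le_max_iff_disj)
  qed
qed

lemma mult_power_le_mult_power_Suc:
  fixes A B x y :: real
  assumes "0 < B" "B \<le> A" "0 \<le> x" "0 \<le> y" and le: "A * x ^ Suc n \<le> B * y ^ Suc n"
  shows "A * x ^ Suc (Suc n) \<le> B * y ^ Suc (Suc n)"
proof -
  have "B * x ^ Suc n \<le> A * x ^ Suc n"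
    using assms(2,3) by (simp add: mult_right_mono)
  also note le
  finally have "x ^ Suc n \<le> y ^ Suc n"
    using assms(1) by (rule mult_left_le_imp_le)
  then have "x \<le> y"
    using assms(4) by (rule power_le_imp_le_base)
  have "A * x ^ Suc (Suc n) = x * (A * x ^ Suc n)" by simp
  also have "\<dots> \<le> y * (A * x ^ Suc n)"
    using \<open>x \<le> y\<close> assms by (intro mult_right_mono) auto
  also have "\<dots> \<le> y * (B * y ^ Suc n)"
    using le assms(4) by (rule mult_left_mono)
  finally show ?thesis by (simp add: mult_ac)
qed

lemma hdist_add_card_Int:
  assumes "finite Z" "finite X"
  shows "hdist Z X + 2 * card (Z \<inter> X) = card Z + card X"
proof -
  have "hdist Z X = card (Z - X) + card (X - Z)"
    unfolding hdist_def using assms by (intro card_Un_disjoint) auto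
  then show ?thesis
    using card_Int_Diff[OF assms(1), of X] card_Int_Diff[OF assms(2), of Z] by (simp add: Int_commute)
qed

lemma P1_empty_eq_sum:
  assumes "X \<subseteq> {0..<d}"
  shows "P1 d mu X {} = (\<Sum>Z\<in>cube d. majority_weight (card X) (card (Z \<inter> X)) * mu Z)"
proof -
  have fin: "finite (cube d)" "finite X" and "\<And>Z. Z \<in> cube d \<Longrightarrow> finite Z"
    using assms by (auto simp: cube_def intro: finite_subset)
  then have dist: "\<And>Z. Z \<in> cube d \<Longrightarrow> hdist Z X + 2 * card (Z \<inter> X) = hdist Z {} + card X"
    using hdist_add_card_Int by (simp add: hdist_def)
  have "vor d X {} = {Z \<in> cube d. card X < 2 * card (Z \<inter> X)}"
    "tie d X {} = {Z \<in> cube d. card X = 2 * card (Z \<inter> X)}"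
    unfolding vor_def tie_def using dist by force+
  then have "P1 d mu X {} = (\<Sum>Z\<in>cube d. if card X < 2 * card (Z \<inter> X) then mu Z else 0)
      + 1/2 * (\<Sum>Z\<in>cube d. if card X = 2 * card (Z \<inter> X) then mu Z else 0)"
    by (simp add: P1_def sum.inter_filter fin)
  also have "\<dots> = (\<Sum>Z\<in>cube d. majority_weight (card X) (card (Z \<inter> X)) * mu Z)"
    unfolding sum_distrib_left sum.distrib[symmetric]
    by (intro sum.cong) (auto simp: majority_weight_def)
  finally show ?thesis .
qed

definition mix_majority_prob :: "real \<Rightarrow> real \<Rightarrow> real \<Rightarrow> nat \<Rightarrow> real" where
  "mix_majority_prob \<alpha> p1 p2 n = (1 - \<alpha>) * majority_prob n p1 + \<alpha> * majority_prob n p2"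

lemma P1_mix_mu_empty:
  assumes "X \<subseteq> {0..<d}"
  shows "P1 d (mix_mu \<alpha> p1 p2 d) X {} = mix_majority_prob \<alpha> p1 p2 (card X)"
proof -
  let ?b = "\<lambda>p Z. majority_weight (card X) (card (Z \<inter> X)) * p ^ card Z * (1 - p) ^ (d - card Z)"
  have b: "(\<Sum>Z\<in>cube d. ?b p Z) = majority_prob (card X) p" for p
    using sum_Pow_Bernoulli_card_Int[of "{0..<d}" "majority_weight (card X)" X p] assms
    by (simp add: cube_def majority_prob_def Int_absorb1)
  have "P1 d (mix_mu \<alpha> p1 p2 d) X {} = (\<Sum>Z\<in>cube d. (1 - \<alpha>) * ?b p1 Z + \<alpha> * ?b p2 Z)"
    unfolding P1_empty_eq_sum[OF assms] mix_mu_def by (intro sum.cong) (simp_all add: algebra_simps)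
  then show ?thesis
    by (simp add: mix_majority_prob_def sum.distrib b flip: sum_distrib_left)
qed

lemma P2_eq_P1_swap: "P2 d mu A B = P1 d mu B A"
  unfolding P1_def P2_def tie_def by (simp add: eq_commute)

lemma equilibrium_self_iff_best_response:
  "equilibrium d mu A A \<longleftrightarrow> best_response d mu A A"
  unfolding equilibrium_def best_response_def P2_eq_P1_swap by blast

lemma mix_majority_prob_0: "mix_majority_prob \<alpha> p1 p2 0 = 1/2"
  by (simp add: mix_majority_prob_def majority_prob_0 field_simps)

lemma mix_majority_prob_odd:
  assumes "1 \<le> n"
  shows "mix_majority_prob \<alpha> p1 p2 n = mix_majority_prob \<alpha> p1 p2 (2 * ((n - 1) div 2) + 1)"
proof (cases "even n")
  case True
  then have "n = 2 * ((n - 1) div 2) + 2"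
    using assms by presburger
  then show ?thesis
    by (metis mix_majority_prob_def majority_prob_even)
next
  case False
  then have "n = 2 * ((n - 1) div 2) + 1" by presburger
  then show ?thesis by simp
qed

lemma mix_majority_prob_odd_step:
  "mix_majority_prob \<alpha> p1 p2 (2 * n + 3) - mix_majority_prob \<alpha> p1 p2 (2 * n + 1)
     = real (2 * n + 1 choose n)
       * (\<alpha> * (2 * p2 - 1) * (p2 * (1 - p2)) ^ Suc n - (1 - \<alpha>) * (1 - 2 * p1) * (p1 * (1 - p1)) ^ Suc n)"
proof -
  have "mix_majority_prob \<alpha> p1 p2 (2 * n + 3) - mix_majority_prob \<alpha> p1 p2 (2 * n + 1)
      = (1 - \<alpha>) * (majority_prob (2 * n + 3) p1 - majority_prob (2 * n + 1) p1)
        + \<alpha> * (majority_prob (2 * n + 3) p2 - majority_prob (2 * n + 1) p2)"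
    by (simp add: mix_majority_prob_def algebra_simps)
  then show ?thesis
    by (simp only: majority_prob_odd_step) (simp add: algebra_simps)
qed

lemma not_equilibrium_empty_empty:
  assumes "1/2 < mix_majority_prob \<alpha> p1 p2 d"
  shows "\<not> equilibrium d (mix_mu \<alpha> p1 p2 d) {} {}"
proof
  assume "equilibrium d (mix_mu \<alpha> p1 p2 d) {} {}"
  then have "P1 d (mix_mu \<alpha> p1 p2 d) {0..<d} {} \<le> P1 d (mix_mu \<alpha> p1 p2 d) {} {}"
    by (simp add: equilibrium_def cube_def)
  with assms show False
    by (simp add: P1_mix_mu_empty mix_majority_prob_0)
qed

context
  fixes \<alpha> p1 p2 :: real
  assumes \<alpha>: "0 < \<alpha>" "\<alpha> < 1" and p1: "0 < p1" "p1 < 1/2" and p2: "1/2 < p2" "p2 < 1"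
    and majority_zero: "(1 - \<alpha>) * (1 - p1) + \<alpha> * (1 - p2) > 1/2"
begin

text \<open>The odd increments are positive multiples of \<open>B y\<^sup>n\<^sup>+\<^sup>1 - A x\<^sup>n\<^sup>+\<^sup>1\<close> with
  \<open>0 < B \<le> A\<close>; once this is nonnegative we must have \<open>x \<le> y\<close>, so it stays nonnegative.\<close>
lemma mix_majority_prob_odd_increase_persists:
  assumes "mix_majority_prob \<alpha> p1 p2 (2 * n + 1) \<le> mix_majority_prob \<alpha> p1 p2 (2 * Suc n + 1)"
  shows "mix_majority_prob \<alpha> p1 p2 (2 * Suc n + 1) \<le> mix_majority_prob \<alpha> p1 p2 (2 * Suc (Suc n) + 1)"
proof -
  let ?A = "(1 - \<alpha>) * (1 - 2 * p1)" and ?B = "\<alpha> * (2 * p2 - 1)"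
  let ?x = "p1 * (1 - p1)" and ?y = "p2 * (1 - p2)"
  have step: "mix_majority_prob \<alpha> p1 p2 (2 * Suc m + 1) - mix_majority_prob \<alpha> p1 p2 (2 * m + 1)
      = real (2 * m + 1 choose m) * (?B * ?y ^ Suc m - ?A * ?x ^ Suc m)" for m
    using mix_majority_prob_odd_step[of \<alpha> p1 p2 m] by (simp add: mult.assoc numeral_3_eq_3)
  have increase_iff: "mix_majority_prob \<alpha> p1 p2 (2 * m + 1) \<le> mix_majority_prob \<alpha> p1 p2 (2 * Suc m + 1)
      \<longleftrightarrow> ?A * ?x ^ Suc m \<le> ?B * ?y ^ Suc m" for m
  proof -
    have "mix_majority_prob \<alpha> p1 p2 (2 * m + 1) \<le> mix_majority_prob \<alpha> p1 p2 (2 * Suc m + 1)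
        \<longleftrightarrow> 0 \<le> real (2 * m + 1 choose m) * (?B * ?y ^ Suc m - ?A * ?x ^ Suc m)"
      using step[of m] by linarith
    also have "\<dots> \<longleftrightarrow> ?A * ?x ^ Suc m \<le> ?B * ?y ^ Suc m"
      by (simp add: zero_le_mult_iff)
    finally show ?thesis .
  qed
  have "0 < ?B" "?B \<le> ?A" "0 \<le> ?x" "0 \<le> ?y"
    using \<alpha> p1 p2 majority_zero by (auto simp: algebra_simps)
  then have "?A * ?x ^ Suc (Suc n) \<le> ?B * ?y ^ Suc (Suc n)"
    using increase_iff[of n, THEN iffD1, OF assms] by (rule mult_power_le_mult_power_Suc)
  then show ?thesis
    by (rule iffD2[OF increase_iff])
qed

lemma mix_majority_prob_le_max:
  assumes "k \<le> d"
  shows "mix_majority_prob \<alpha> p1 p2 k \<le> max (1/2) (mix_majority_prob \<alpha> p1 p2 d)"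
proof (cases "k = 0")
  case True
  then show ?thesis by (simp add: mix_majority_prob_0)
next
  case False
  let ?h = "\<lambda>n. mix_majority_prob \<alpha> p1 p2 (2 * n + 1)"
  have "?h 0 < 1/2"
    using majority_zero majority_prob_1[of p1] majority_prob_1[of p2]
    by (simp add: mix_majority_prob_def algebra_simps)
  moreover have "?h ((k - 1) div 2) \<le> max (?h 0) (?h ((d - 1) div 2))"
    using assms by (intro le_max_endpoints_if_increase_persists mix_majority_prob_odd_increase_persists)
                   (simp_all add: div_le_mono)
  ultimately have "?h ((k - 1) div 2) \<le> max (1/2) (?h ((d - 1) div 2))"
    by (auto simp: le_max_iff_disj)
  then show ?thesis
    using False assms mix_majority_prob_odd[of k] mix_majority_prob_odd[of d] by simp
qed

lemma mix_majority_prob_tendsto: "mix_majority_prob \<alpha> p1 p2 \<longlonglongrightarrow> \<alpha>"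
proof -
  have "(\<lambda>n. (1 - \<alpha>) * majority_prob n p1 + \<alpha> * majority_prob n p2) \<longlonglongrightarrow> (1 - \<alpha>) * 0 + \<alpha> * 1"
    using p1 p2 by (intro tendsto_intros majority_prob_tendsto_0 majority_prob_tendsto_1) auto
  then show ?thesis by (simp add: mix_majority_prob_def[abs_def])
qed

lemma P1_mix_mu_empty_le_max:
  assumes "X \<in> cube d"
  shows "P1 d (mix_mu \<alpha> p1 p2 d) X {} \<le> max (1/2) (mix_majority_prob \<alpha> p1 p2 d)"
proof -
  have "X \<subseteq> {0..<d}" "card X \<le> d"
    using assms card_mono[of "{0..<d}" X] by (auto simp: cube_def)
  then show ?thesis
    by (simp add: P1_mix_mu_empty mix_majority_prob_le_max)
qed

lemma best_response_empty_empty: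
  assumes "mix_majority_prob \<alpha> p1 p2 d \<le> 1/2"
  shows "best_response d (mix_mu \<alpha> p1 p2 d) {} {}"
  unfolding best_response_def
proof (intro conjI ballI)
  fix X assume "X \<in> cube d"
  then show "P1 d (mix_mu \<alpha> p1 p2 d) X {} \<le> P1 d (mix_mu \<alpha> p1 p2 d) {} {}"
    using P1_mix_mu_empty_le_max[of X d] assms by (simp add: P1_mix_mu_empty mix_majority_prob_0)
qed (simp add: cube_def)

lemma best_response_full_empty:
  assumes "1/2 \<le> mix_majority_prob \<alpha> p1 p2 d"
  shows "best_response d (mix_mu \<alpha> p1 p2 d) {0..<d} {}"
  unfolding best_response_def
proof (intro conjI ballI)
  fix X assume "X \<in> cube d"
  then show "P1 d (mix_mu \<alpha> p1 p2 d) X {} \<le> P1 d (mix_mu \<alpha> p1 p2 d) {0..<d} {}"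
    using P1_mix_mu_empty_le_max[of X d] assms by (simp add: P1_mix_mu_empty)
qed (simp add: cube_def)

end

theorem mainTheorem12:
  fixes \<alpha> p1 p2 :: real
  assumes "0 < \<alpha>" "\<alpha> < 1" "0 < p1" "p1 < 1/2" "1/2 < p2" "p2 < 1"
    and "(1 - \<alpha>) * (1 - p1) + \<alpha> * (1 - p2) > 1/2"
  shows "(\<forall>d\<ge>1.
            (best_response d (mix_mu \<alpha> p1 p2 d) {} {} \<and> equilibrium d (mix_mu \<alpha> p1 p2 d) {} {})
            \<or> best_response d (mix_mu \<alpha> p1 p2 d) {0..<d} {})
       \<and> ((\<lambda>d. P1 d (mix_mu \<alpha> p1 p2 d) {0..<d} {}) \<longlonglongrightarrow> \<alpha>)
       \<and> (\<alpha> > 1/2 \<longrightarrow> (\<forall>\<^sub>F d in sequentially.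
              P1 d (mix_mu \<alpha> p1 p2 d) {0..<d} {} > 1/2
              \<and> \<not> equilibrium d (mix_mu \<alpha> p1 p2 d) {} {}
              \<and> best_response d (mix_mu \<alpha> p1 p2 d) {0..<d} {}))
       \<and> (\<alpha> < 1/2 \<longrightarrow> (\<forall>\<^sub>F d in sequentially. equilibrium d (mix_mu \<alpha> p1 p2 d) {} {}))"
proof -
  let ?g = "mix_majority_prob \<alpha> p1 p2"
  have P1_full: "P1 d (mix_mu \<alpha> p1 p2 d) {0..<d} {} = ?g d" for d
    by (simp add: P1_mix_mu_empty)
  note empty = best_response_empty_empty[OF assms]
  note full = best_response_full_empty[OF assms]
  have "(best_response d (mix_mu \<alpha> p1 p2 d) {} {} \<and> equilibrium d (mix_mu \<alpha> p1 p2 d) {} {})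
      \<or> best_response d (mix_mu \<alpha> p1 p2 d) {0..<d} {}" for d
    using empty full by (cases "?g d \<le> 1/2") (auto simp: equilibrium_self_iff_best_response)
  moreover have lim: "?g \<longlonglongrightarrow> \<alpha>"
    by (rule mix_majority_prob_tendsto[OF assms])
  moreover have "\<alpha> > 1/2 \<Longrightarrow> \<forall>\<^sub>F d in sequentially. ?g d > 1/2"
    and "\<alpha> < 1/2 \<Longrightarrow> \<forall>\<^sub>F d in sequentially. ?g d < 1/2"
    using order_tendstoD[OF lim] by blast+
  ultimately show ?thesis
    using empty full not_equilibrium_empty_empty
    by (auto simp: P1_full equilibrium_self_iff_best_response elim!: eventually_mono)
qed

end
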